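(* Let $\pi$ be a permutation of a finite set $F$. Suppose $\mathcal{C}\subset 2^F$ and $G\subset F$ satisfy: (1) $\pi(E)=E$ for every $E\in\mathcal{C}$; (2) if $E_1,E_2\in\mathcal{C}$, then $E_1\cup E_2\in\mathcal{C}$ and $E_1\setminus E_2\in\mathcal{C}$; (3) $G\neq\emptyset$ and $\pi(G)=G$; (4) if $E\subset G$ and $\pi(E)=E$, then $E\in\mathcal{C}$. Then $$\sum_{E\in\mathcal{C}\setminus\{\emptyset\}}(-1)^{|E|+1}\operatorname{sgn}(\pi|_E)=1.$$
   Context: For $E$ with $\pi(E)=E$, $\pi|_E$ is a permutation of $E$ and $\operatorname{sgn}(\pi|_E)$ denotes its sign. *)

theory Defs
  imports "HOL-Combinatorics.Combinatorics"
begin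

end

theory Submission
  imports Defs
begin

text \<open>
  Pick a point \<open>a \<in> G\<close> and let \<open>O\<close> be its \<open>\<pi>\<close>-orbit. By (3) and (4), \<open>O \<in> \<C>\<close>, and since
  every member of \<open>\<C>\<close> is \<open>\<pi>\<close>-invariant it either contains \<open>O\<close> or is disjoint from it. By (2),
  \<open>E \<mapsto> E \<union> O\<close> is then a bijection from the members disjoint from \<open>O\<close> onto those containing
  \<open>O\<close>. As \<open>\<pi>|\<^sub>O\<close> is a cycle of length \<open>|O|\<close>, adjoining \<open>O\<close> multiplies the summand
  \<open>(-1)\<^bsup>|E|+1\<^esup> sgn(\<pi>|\<^sub>E)\<close> by \<open>(-1)\<^bsup>|O|\<^esup>(-1)\<^bsup>|O|-1\<^esup> = -1\<close>. Hence the sum over all of \<open>\<C>\<close> vanishes,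
  and removing the term \<open>-1\<close> of \<open>E = {}\<close> leaves \<open>1\<close>.
\<close>

lemma sign_cycle_of_list:
  "distinct cs \<Longrightarrow> sign (cycle_of_list cs) = (-1::int) ^ (length cs - 1)"
proof (induct cs rule: cycle_of_list.induct)
  case (1 i j cs)
  have "sign (cycle_of_list (i # j # cs)) = sign (transpose i j) * sign (cycle_of_list (j # cs))"
    by (simp add: sign_compose permutation_swap_id permutation_of_cycle)
  also have "\<dots> = - ((-1::int) ^ (length (j # cs) - 1))"
    using 1 by (simp add: sign_swap_id)
  also have "\<dots> = (-1::int) ^ (length (i # j # cs) - 1)" by simp
  finally show ?case .
qed simp_all

lemma orbit_subset_invariant:
  assumes "f ` S \<subseteq> S" and "x \<in> S"
  shows "orbit f x \<subseteq> S"
proof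
  fix y assume "y \<in> orbit f x"
  then show "y \<in> S" by induct (use assms in auto)
qed

lemma orbit_subset_if_meets_invariant:
  assumes "permutation f" and "f ` S \<subseteq> S" and "S \<inter> orbit f a \<noteq> {}"
  shows "orbit f a \<subseteq> S"
proof -
  obtain y where y: "y \<in> S" "y \<in> orbit f a" using assms(3) by blast
  have "orbit f a = orbit f y"
    using cyclic_on_orbit'[OF assms(1)] y(2) by (simp add: cyclic_on_alldef)
  with orbit_subset_invariant[OF assms(2) y(1)] show ?thesis by simp
qed

lemma image_orbit_permutation:
  assumes "permutation f"
  shows "f ` orbit f a = orbit f a"
proof
  show "f ` orbit f a \<subseteq> orbit f a" by (auto intro: orbit.step)
  show "orbit f a \<subseteq> f ` orbit f a"
  proof
    fix y assume "y \<in> orbit f a"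
    then show "y \<in> f ` orbit f a"
      by cases (use permutation_self_in_orbit[OF assms] in auto)
  qed
qed

lemma set_support_eq_orbit:
  assumes "permutation p"
  shows "set (support p a) = orbit p a"
  unfolding support_set[OF assms] orbit_altdef_permutation[OF assms] by auto

lemma restrict_id_orbit_eq_cycle_of_list:
  assumes "permutation p"
  shows "restrict_id p (orbit p a) = cycle_of_list (support p a)"
proof
  fix x show "restrict_id p (orbit p a) x = cycle_of_list (support p a) x"
    using cycle_restrict[OF assms, of x a] id_outside_supp[of x "support p a"]
    unfolding set_support_eq_orbit[OF assms] by (cases "x \<in> orbit p a") simp_all
qed

lemma sign_restrict_id_orbit:
  assumes "permutation p"
  shows "sign (restrict_id p (orbit p a)) = - ((-1::int) ^ card (orbit p a))"
proof -
  have distinct: "distinct (support p a)"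
    using cycle_of_permutation[OF assms] .
  have card: "card (orbit p a) = least_power p a"
    using distinct_card[OF distinct] unfolding set_support_eq_orbit[OF assms] by simp
  have "least_power p a > 0"
    using least_power_of_permutation(2)[OF assms] .
  then show ?thesis
    unfolding restrict_id_orbit_eq_cycle_of_list[OF assms] sign_cycle_of_list[OF distinct] card
    by (cases "least_power p a") simp_all
qed

lemma sign_restrict_id_Un:
  assumes "finite A" "finite B" "A \<inter> B = {}" "bij_betw p A A" "bij_betw p B B"
  shows "sign (restrict_id p (A \<union> B)) = sign (restrict_id p A) * sign (restrict_id p B)"
proof -
  have "restrict_id p (A \<union> B) = restrict_id p A \<circ> restrict_id p B"
    using assms(3) bij_betw_imp_surj_on[OF assms(5)] by (auto simp: fun_eq_iff restrict_id_def)
  moreover have "permutation (restrict_id p A)" "permutation (restrict_id p B)"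
    using permutes_restrict_id assms permutes_imp_permutation by blast+
  ultimately show ?thesis by (simp add: sign_compose)
qed

lemma permutation_bij_betw_invariant:
  assumes "permutation p" and "p ` A = A"
  shows "bij_betw p A A"
  using assms(2) inj_on_subset[OF bij_is_inj[OF permutation_bijective[OF assms(1)]] subset_UNIV]
  by (simp add: bij_betw_def)

lemma signed_sign_restrict_id_Un_orbit:
  assumes "permutation p" and "finite E" and "bij_betw p E E" and "E \<inter> orbit p a = {}"
  shows "(-1::int) ^ card (E \<union> orbit p a) * sign (restrict_id p (E \<union> orbit p a))
           = - ((-1) ^ card E * sign (restrict_id p E))"
proof -
  have "finite (orbit p a)" using finite_orbit[OF permutation_self_in_orbit[OF assms(1)]] .
  moreover have "bij_betw p (orbit p a) (orbit p a)"
    using permutation_bij_betw_invariant[OF assms(1) image_orbit_permutation[OF assms(1)]] .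
  ultimately have "card (E \<union> orbit p a) = card E + card (orbit p a)"
    and "sign (restrict_id p (E \<union> orbit p a))
           = sign (restrict_id p E) * - ((-1) ^ card (orbit p a))"
    using assms(2-4) sign_restrict_id_Un[of E "orbit p a" p] sign_restrict_id_orbit[OF assms(1), of a]
    by (simp_all add: card_Un_disjoint)
  then show ?thesis by (simp add: power_add)
qed

text \<open>Adjoining \<open>S\<close> pairs the members avoiding \<open>S\<close> with those containing it.\<close>
lemma sum_eq_0_if_adjoining_atom_negates:
  fixes f :: "'a set \<Rightarrow> 'b::ab_group_add"
  assumes "finite \<C>" and "S \<in> \<C>" and "S \<noteq> {}"
    and closed: "\<And>E1 E2. E1 \<in> \<C> \<Longrightarrow> E2 \<in> \<C> \<Longrightarrow> E1 \<union> E2 \<in> \<C> \<and> E1 - E2 \<in> \<C>"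
    and atom: "\<And>E. E \<in> \<C> \<Longrightarrow> E \<inter> S = {} \<or> S \<subseteq> E"
    and negate: "\<And>E. E \<in> \<C> \<Longrightarrow> E \<inter> S = {} \<Longrightarrow> f (E \<union> S) = - f E"
  shows "sum f \<C> = 0"
proof -
  define A where "A = {E \<in> \<C>. E \<inter> S = {}}"
  define B where "B = {E \<in> \<C>. S \<subseteq> E}"
  have "\<C> = A \<union> B" "A \<inter> B = {}"
    using atom \<open>S \<noteq> {}\<close> by (auto simp: A_def B_def)
  moreover have "B = (\<lambda>E. E \<union> S) ` A"
  proof
    show "(\<lambda>E. E \<union> S) ` A \<subseteq> B" using closed \<open>S \<in> \<C>\<close> by (auto simp: A_def B_def)
    show "B \<subseteq> (\<lambda>E. E \<union> S) ` A"
    proof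
      fix E assume "E \<in> B"
      then have "E - S \<in> A" "E = (E - S) \<union> S"
        using closed \<open>S \<in> \<C>\<close> by (auto simp: A_def B_def)
      then show "E \<in> (\<lambda>E. E \<union> S) ` A" by blast
    qed
  qed
  moreover have "inj_on (\<lambda>E. E \<union> S) A"
    by (rule inj_onI) (auto simp: A_def)
  moreover have "finite A" using \<open>finite \<C>\<close> by (simp add: A_def)
  ultimately have "sum f \<C> = sum f A + sum (\<lambda>E. f (E \<union> S)) A"
    by (simp add: sum.union_disjoint sum.reindex)
  also have "\<dots> = sum f A + sum (\<lambda>E. - f E) A"
    by (simp add: A_def negate)
  finally show ?thesis by (simp add: sum_negf)
qed

theorem lemma2p3:
  fixes \<pi> :: "'a \<Rightarrow> 'a" and F G :: "'a set" and \<C> :: "'a set set"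
  assumes "finite F" and "\<pi> permutes F"
    and "\<C> \<subseteq> Pow F" and "G \<subseteq> F"
    and "\<And>E. E \<in> \<C> \<Longrightarrow> \<pi> ` E = E"
    and "\<And>E1 E2. E1 \<in> \<C> \<Longrightarrow> E2 \<in> \<C> \<Longrightarrow> E1 \<union> E2 \<in> \<C> \<and> E1 - E2 \<in> \<C>"
    and "G \<noteq> {}" and "\<pi> ` G = G"
    and "\<And>E. E \<subseteq> G \<Longrightarrow> \<pi> ` E = E \<Longrightarrow> E \<in> \<C>"
  shows "(\<Sum>E\<in>\<C> - {{}}. (-1::int) ^ (card E + 1) * sign (restrict_id \<pi> E)) = 1"
proof -
  define f where "f E = (-1::int) ^ (card E + 1) * sign (restrict_id \<pi> E)" for E
  have perm: "permutation \<pi>" using assms(1,2) permutes_imp_permutation by blast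
  have "finite \<C>" using assms(1,3) finite_subset by blast
  obtain a where "a \<in> G" using assms(7) by blast
  define Orb where "Orb = orbit \<pi> a"
  have "Orb \<subseteq> G" using orbit_subset_invariant[of \<pi> G a] assms(8) \<open>a \<in> G\<close> by (simp add: Orb_def)
  then have "Orb \<in> \<C>" using assms(9) image_orbit_permutation[OF perm] by (simp add: Orb_def)
  have "f (E \<union> Orb) = - f E" if "E \<in> \<C>" "E \<inter> Orb = {}" for E
  proof -
    have "finite E" using that(1) assms(1,3) finite_subset by blast
    moreover have "bij_betw \<pi> E E"
      using permutation_bij_betw_invariant[OF perm assms(5)[OF that(1)]] .
    ultimately show ?thesis
      using signed_sign_restrict_id_Un_orbit[OF perm] that(2) by (simp add: f_def Orb_def)
  qed
  then have "sum f \<C> = 0"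
    using sum_eq_0_if_adjoining_atom_negates[of \<C> Orb f] assms(6) \<open>finite \<C>\<close> \<open>Orb \<in> \<C>\<close>
      orbit_subset_if_meets_invariant[OF perm] assms(5) orbit_nonempty
    by (metis Orb_def Int_commute equalityD1)
  moreover have "{} \<in> \<C>" using assms(9) by simp
  ultimately show ?thesis
    using \<open>finite \<C>\<close> by (simp add: sum.remove f_def restrict_id_def)
qed

end
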